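(* Let $n$ be even and let $A$ be an $n\times n$ row substochastic matrix with row sums $r_1,\dots,r_n$. Then there is a listing $x_1,\dots,x_n$ of the row sums (i.e. $x_k=r_{\tau(k)}$ for some permutation $\tau$ of $\{1,\dots,n\}$) such that $$\operatorname{per}(I-A)\le (1+x_1x_2)(1+x_3x_4)\cdots(1+x_{n-1}x_n).$$
   Context: An $n\times n$ matrix is row substochastic if all its entries are nonnegative and each row sum is at most $1$. The permanent is $\operatorname{per}(M)=\sum_{\pi\in S_n}\prod_i m_{i\pi(i)}$, and $I$ is the identity matrix. *)

theory Defs
  imports Complex_Main "HOL-Combinatorics.Permutations"
begin

text \<open>n x n real matrices are represented as functions nat => nat => real,
  with indices ranging over {0..<n}.\<close>

definition per :: "nat \<Rightarrow> (nat \<Rightarrow> nat \<Rightarrow> real) \<Rightarrow> real" where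
  "per n M = (\<Sum>\<pi> | \<pi> permutes {0..<n}. \<Prod>i<n. M i (\<pi> i))"

definition row_substochastic :: "nat \<Rightarrow> (nat \<Rightarrow> nat \<Rightarrow> real) \<Rightarrow> bool" where
  "row_substochastic n A \<longleftrightarrow>
     (\<forall>i<n. \<forall>j<n. 0 \<le> A i j) \<and> (\<forall>i<n. (\<Sum>j<n. A i j) \<le> 1)"

definition row_sum :: "nat \<Rightarrow> (nat \<Rightarrow> nat \<Rightarrow> real) \<Rightarrow> nat \<Rightarrow> real" where
  "row_sum n A i = (\<Sum>j<n. A i j)"

definition id_minus :: "(nat \<Rightarrow> nat \<Rightarrow> real) \<Rightarrow> nat \<Rightarrow> nat \<Rightarrow> real" where
  "id_minus A i j = (if i = j then 1 else 0) - A i j"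

end

(*
  Write row i of A as r_i times a probability vector, where r_i is its row sum. By
  multilinearity of the permanent in the rows, per (I - A) is then a convex combination of
  permanents of matrices I - diag r * P_g, where P_g is the 0/1 matrix of a self-map g of the
  index set, so it suffices to bound each of these by the right-hand side for some listing.

  In I - diag r * P_g, a row or column without off-diagonal entry splits off a diagonal factor
  in [0, 1 + max 0 (-r_i)]. Otherwise g is a fixed-point-free permutation, and expanding along
  the unique arrow j -> i contracts the path j -> i -> g i to one arrow j -> g i of weight
  -r_i r_j, removing the index i. By induction the permanent is at most a product over an
  involution in which every fixed point contributes 1 + max 0 (-r_i) and every 2-cycle {i, j}
  contributes 1 + |r_i r_j|. For nonnegative r the fixed points contribute 1 and may be paired
  arbitrarily, so the bound becomes a product over a pairing of the row sums; the largest of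
  the finitely many such products bounds the convex combination.
*)

theory Submission
  imports Defs
begin

section \<open>Permanents over finite index sets\<close>

definition per_on :: "'a set \<Rightarrow> ('a \<Rightarrow> 'a \<Rightarrow> 'b::comm_semiring_1) \<Rightarrow> 'b" where
  "per_on S M = (\<Sum>\<pi> | \<pi> permutes S. \<Prod>i\<in>S. M i (\<pi> i))"

lemma per_eq_per_on: "per n M = per_on {..<n} M"
  by (simp add: per_def per_on_def atLeast0LessThan)

lemma per_on_cong:
  assumes "\<And>i j. i \<in> S \<Longrightarrow> j \<in> S \<Longrightarrow> M i j = M' i j"
  shows "per_on S M = per_on S M'"
  unfolding per_on_def
  by (intro sum.cong refl prod.cong) (auto simp: assms permutes_in_image)

lemma per_on_empty [simp]: "per_on {} M = 1"
  unfolding per_on_def by simp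

lemma permutes_fixing_eq:
  assumes "i \<in> S"
  shows "{\<pi>. \<pi> permutes S \<and> \<pi> i = i} = {\<pi>. \<pi> permutes (S - {i})}"
proof (intro set_eqI iffI)
  fix \<pi> assume "\<pi> \<in> {\<pi>. \<pi> permutes S \<and> \<pi> i = i}"
  then have \<pi>: "\<pi> permutes S" "\<pi> i = i" by auto
  have "\<pi> permutes S - {i}"
    by (rule permutes_superset[OF \<pi>(1)]) (use \<pi>(2) in blast)
  then show "\<pi> \<in> {\<pi>. \<pi> permutes (S - {i})}" by simp
next
  fix \<pi> assume "\<pi> \<in> {\<pi>. \<pi> permutes (S - {i})}"
  then have \<pi>: "\<pi> permutes S - {i}" by simp
  have "\<pi> permutes S" by (rule permutes_subset[OF \<pi>]) blast
  moreover have "\<pi> i = i" using \<pi> by (simp add: permutes_not_in)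
  ultimately show "\<pi> \<in> {\<pi>. \<pi> permutes S \<and> \<pi> i = i}" by simp
qed

lemma per_on_eq_sum_permutes_value:
  assumes fin: "finite S"
    and vanish: "\<And>\<pi>. \<pi> permutes S \<Longrightarrow> \<pi> j \<noteq> i \<Longrightarrow> (\<Prod>l\<in>S. M l (\<pi> l)) = 0"
  shows "per_on S M = (\<Sum>\<pi> | \<pi> permutes S \<and> \<pi> j = i. \<Prod>l\<in>S. M l (\<pi> l))"
proof -
  have "per_on S M = (\<Sum>\<pi> | \<pi> permutes S. if \<pi> j = i then (\<Prod>l\<in>S. M l (\<pi> l)) else 0)"
    unfolding per_on_def by (intro sum.cong refl) (auto simp: vanish)
  also have "\<dots> = (\<Sum>\<pi> | \<pi> permutes S \<and> \<pi> j = i. \<Prod>l\<in>S. M l (\<pi> l))"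
    using sum.inter_filter[of "{\<pi>. \<pi> permutes S}" "\<lambda>\<pi>. \<Prod>l\<in>S. M l (\<pi> l)" "\<lambda>\<pi>. \<pi> j = i"]
      finite_permutations[OF fin] by simp
  finally show ?thesis .
qed

lemma per_on_fixed_entry:
  assumes fin: "finite S" and i: "i \<in> S"
    and vanish: "\<And>\<pi>. \<pi> permutes S \<Longrightarrow> \<pi> i \<noteq> i \<Longrightarrow> (\<Prod>l\<in>S. M l (\<pi> l)) = 0"
  shows "per_on S M = M i i * per_on (S - {i}) M"
proof -
  have "per_on S M = (\<Sum>\<pi> | \<pi> permutes (S - {i}). \<Prod>l\<in>S. M l (\<pi> l))"
    using per_on_eq_sum_permutes_value[where i = i and j = i, OF fin vanish]
    unfolding permutes_fixing_eq[OF i] .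
  also have "\<dots> = (\<Sum>\<pi> | \<pi> permutes (S - {i}). M i i * (\<Prod>l\<in>S - {i}. M l (\<pi> l)))"
    by (intro sum.cong refl) (simp add: prod.remove[OF fin i] permutes_not_in)
  finally show ?thesis unfolding per_on_def by (simp add: sum_distrib_left)
qed

lemma per_on_diagonal_row:
  assumes fin: "finite S" and i: "i \<in> S" and row: "\<And>j. j \<in> S \<Longrightarrow> j \<noteq> i \<Longrightarrow> M i j = 0"
  shows "per_on S M = M i i * per_on (S - {i}) M"
proof (rule per_on_fixed_entry[OF fin i])
  fix \<pi> assume \<pi>: "\<pi> permutes S" "\<pi> i \<noteq> i"
  then have "M i (\<pi> i) = 0" using row i by (simp add: permutes_in_image)
  then show "(\<Prod>l\<in>S. M l (\<pi> l)) = 0" by (simp add: prod.remove[OF fin i])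
qed

lemma per_on_diagonal_column:
  assumes fin: "finite S" and i: "i \<in> S" and col: "\<And>l. l \<in> S \<Longrightarrow> l \<noteq> i \<Longrightarrow> M l i = 0"
  shows "per_on S M = M i i * per_on (S - {i}) M"
proof (rule per_on_fixed_entry[OF fin i])
  fix \<pi> assume \<pi>: "\<pi> permutes S" "\<pi> i \<noteq> i"
  obtain l where l: "l \<in> S" "\<pi> l = i" using permutes_image[OF \<pi>(1)] i by force
  with \<pi>(2) have "l \<noteq> i" by auto
  then have "M l (\<pi> l) = 0" using col[OF l(1)] l(2) by simp
  then show "(\<Prod>l\<in>S. M l (\<pi> l)) = 0" by (simp add: prod.remove[OF fin l(1)])
qed

lemma per_on_row_additive:
  assumes fin: "finite S" and j: "j \<in> S"
    and row_j: "\<And>c. c \<in> S \<Longrightarrow> M j c = M1 j c + M2 j c"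
    and rows: "\<And>l c. l \<in> S \<Longrightarrow> l \<noteq> j \<Longrightarrow> c \<in> S \<Longrightarrow> M1 l c = M l c \<and> M2 l c = M l c"
  shows "per_on S M = per_on S M1 + per_on S M2"
proof -
  have "(\<Prod>l\<in>S. M l (\<pi> l)) = (\<Prod>l\<in>S. M1 l (\<pi> l)) + (\<Prod>l\<in>S. M2 l (\<pi> l))"
    if \<pi>: "\<pi> permutes S" for \<pi>
  proof -
    have "(\<Prod>l\<in>S - {j}. M1 l (\<pi> l)) = (\<Prod>l\<in>S - {j}. M l (\<pi> l))"
      by (intro prod.cong refl) (simp add: rows permutes_in_image[OF \<pi>])
    moreover have "(\<Prod>l\<in>S - {j}. M2 l (\<pi> l)) = (\<Prod>l\<in>S - {j}. M l (\<pi> l))"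
      by (intro prod.cong refl) (simp add: rows permutes_in_image[OF \<pi>])
    moreover have "M j (\<pi> j) = M1 j (\<pi> j) + M2 j (\<pi> j)"
      using row_j j by (simp add: permutes_in_image[OF \<pi>])
    ultimately show ?thesis
      by (simp add: prod.remove[OF fin j] distrib_right)
  qed
  then show ?thesis unfolding per_on_def by (simp add: sum.distrib)
qed

lemma sum_permutes_value_reindex:
  assumes i: "i \<in> S" and j: "j \<in> S"
  shows "(\<Sum>\<pi> | \<pi> permutes S \<and> \<pi> j = i. f \<pi>) = (\<Sum>\<pi> | \<pi> permutes (S - {i}). f (\<pi> \<circ> transpose i j))"
proof -
  have involutory: "\<pi> \<circ> transpose i j \<circ> transpose i j = \<pi>" for \<pi> :: "'a \<Rightarrow> 'a"
    by (simp add: fun_eq_iff)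
  show ?thesis
  proof (rule sum.reindex_bij_witness[where i = "\<lambda>\<pi>. \<pi> \<circ> transpose i j" and j = "\<lambda>\<pi>. \<pi> \<circ> transpose i j"])
    fix \<pi> assume \<pi>: "\<pi> \<in> {\<pi>. \<pi> permutes S \<and> \<pi> j = i}"
    then have "\<pi> \<circ> transpose i j permutes S"
      by (intro permutes_compose permutes_swap_id i j) auto
    moreover have "(\<pi> \<circ> transpose i j) i = i" using \<pi> by simp
    ultimately show "\<pi> \<circ> transpose i j \<in> {\<pi>. \<pi> permutes (S - {i})}"
      using permutes_fixing_eq[OF i] by blast
  next
    fix \<pi> assume \<pi>: "\<pi> \<in> {\<pi>. \<pi> permutes (S - {i})}"
    then have "\<pi> permutes S" by (auto intro: permutes_subset)
    then have "\<pi> \<circ> transpose i j permutes S"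
      by (intro permutes_compose permutes_swap_id i j) auto
    moreover have "(\<pi> \<circ> transpose i j) j = i" using \<pi> by (simp add: permutes_not_in)
    ultimately show "\<pi> \<circ> transpose i j \<in> {\<pi>. \<pi> permutes S \<and> \<pi> j = i}" by blast
  qed (simp_all add: involutory)
qed

text \<open>Expanding the permanent along a column with a single off-diagonal entry \<open>M j i\<close>
  merges rows \<open>i\<close> and \<open>j\<close>.\<close>
lemma per_on_contract:
  assumes fin: "finite S" and i: "i \<in> S" and j: "j \<in> S" and "i \<noteq> j"
    and col: "\<And>l. l \<in> S \<Longrightarrow> l \<noteq> j \<Longrightarrow> M l i = 0"
  shows "per_on S M = per_on (S - {i}) (M(j := (\<lambda>c. M j i * M i c)))"
proof -
  let ?M' = "M(j := (\<lambda>c. M j i * M i c))"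
  have fin': "finite (S - {i})" and j': "j \<in> S - {i}" using fin j \<open>i \<noteq> j\<close> by auto
  have vanish: "(\<Prod>l\<in>S. M l (\<pi> l)) = 0" if \<pi>: "\<pi> permutes S" "\<pi> j \<noteq> i" for \<pi>
  proof -
    obtain l where l: "l \<in> S" "\<pi> l = i" using permutes_image[OF \<pi>(1)] i by force
    then have "l \<noteq> j" using \<pi> by auto
    then have "M l (\<pi> l) = 0" using col l by auto
    then show ?thesis by (simp add: prod.remove[OF fin l(1)])
  qed
  have "(\<Prod>l\<in>S. M l ((\<pi> \<circ> transpose i j) l)) = (\<Prod>l\<in>S - {i}. ?M' l (\<pi> l))"
    if "\<pi> permutes (S - {i})" for \<pi>
  proof -
    have "\<pi> i = i" using that by (simp add: permutes_not_in)
    have "(\<Prod>l\<in>S. M l ((\<pi> \<circ> transpose i j) l))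
        = M i (\<pi> j) * (M j i * (\<Prod>l\<in>S - {i} - {j}. M l (\<pi> l)))"
      using \<open>i \<noteq> j\<close> \<open>\<pi> i = i\<close>
      by (simp add: prod.remove[OF fin i] prod.remove[OF fin' j'] transpose_apply_other)
    also have "\<dots> = (\<Prod>l\<in>S - {i}. ?M' l (\<pi> l))"
      by (simp add: prod.remove[OF fin' j'] mult_ac)
    finally show ?thesis .
  qed
  then have "(\<Sum>\<pi> | \<pi> permutes (S - {i}). \<Prod>l\<in>S. M l ((\<pi> \<circ> transpose i j) l)) = per_on (S - {i}) ?M'"
    unfolding per_on_def by (intro sum.cong) auto
  moreover have "per_on S M = (\<Sum>\<pi> | \<pi> permutes S \<and> \<pi> j = i. \<Prod>l\<in>S. M l (\<pi> l))"
    by (rule per_on_eq_sum_permutes_value[OF fin]) (rule vanish)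
  ultimately show ?thesis by (simp add: sum_permutes_value_reindex[OF i j])
qed

lemma per_on_multilinear:
  assumes fin: "finite S" and fin_K: "\<And>i. i \<in> S \<Longrightarrow> finite (K i)"
    and rows: "\<And>i j. i \<in> S \<Longrightarrow> j \<in> S \<Longrightarrow> M i j = (\<Sum>k\<in>K i. c i k * E i k j)"
  shows "per_on S M = (\<Sum>g\<in>PiE S K. (\<Prod>i\<in>S. c i (g i)) * per_on S (\<lambda>i. E i (g i)))"
proof -
  have "(\<Prod>i\<in>S. M i (\<pi> i)) = (\<Sum>g\<in>PiE S K. (\<Prod>i\<in>S. c i (g i)) * (\<Prod>i\<in>S. E i (g i) (\<pi> i)))"
    if \<pi>: "\<pi> permutes S" for \<pi>
  proof -
    have "(\<Prod>i\<in>S. M i (\<pi> i)) = (\<Prod>i\<in>S. \<Sum>k\<in>K i. c i k * E i k (\<pi> i))"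
      by (intro prod.cong refl) (simp add: rows permutes_in_image[OF \<pi>])
    also have "\<dots> = (\<Sum>g\<in>PiE S K. \<Prod>i\<in>S. c i (g i) * E i (g i) (\<pi> i))"
      by (rule prod_sum_PiE[OF fin fin_K])
    finally show ?thesis by (simp add: prod.distrib)
  qed
  then have "per_on S M = (\<Sum>\<pi> | \<pi> permutes S. \<Sum>g\<in>PiE S K.
      (\<Prod>i\<in>S. c i (g i)) * (\<Prod>i\<in>S. E i (g i) (\<pi> i)))"
    unfolding per_on_def by (intro sum.cong) auto
  also have "\<dots> = (\<Sum>g\<in>PiE S K. (\<Prod>i\<in>S. c i (g i)) * per_on S (\<lambda>i. E i (g i)))"
    unfolding per_on_def by (subst sum.swap) (simp add: sum_distrib_left)
  finally show ?thesis .
qed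

section \<open>Matrices of self-maps and involution weights\<close>

text \<open>\<open>fun_matrix g r\<close> is \<open>I - diag r * P\<^sub>g\<close>, where \<open>P\<^sub>g\<close> is the 0/1 matrix of the map \<open>g\<close>.\<close>
definition fun_matrix :: "('a \<Rightarrow> 'a) \<Rightarrow> ('a \<Rightarrow> real) \<Rightarrow> 'a \<Rightarrow> 'a \<Rightarrow> real" where
  "fun_matrix g r l c = (if l = c then 1 else 0) - r l * (if g l = c then 1 else 0)"

definition involution_on :: "('a \<Rightarrow> 'a) \<Rightarrow> 'a set \<Rightarrow> bool" where
  "involution_on \<sigma> S \<longleftrightarrow> (\<forall>l\<in>S. \<sigma> l \<in> S \<and> \<sigma> (\<sigma> l) = l)"

text \<open>A 2-cycle \<open>{i, \<sigma> i}\<close> of \<open>\<sigma>\<close> carries the weight \<open>1 + \<bar>r i * r (\<sigma> i)\<bar>\<close>, split as a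
  square root between its two points so that weights multiply pointwise.\<close>
definition pair_weight :: "('a \<Rightarrow> 'a) \<Rightarrow> ('a \<Rightarrow> real) \<Rightarrow> 'a \<Rightarrow> real" where
  "pair_weight \<sigma> r i =
     (if \<sigma> i = i then 1 + max 0 (- r i) else sqrt (1 + \<bar>r i * r (\<sigma> i)\<bar>))"

lemma pair_weight_nonneg: "0 \<le> pair_weight \<sigma> r i"
  unfolding pair_weight_def by auto

lemma pair_weight_2cycle:
  assumes "\<sigma> i = j" "\<sigma> j = i" "i \<noteq> j"
  shows "pair_weight \<sigma> r i * pair_weight \<sigma> r j = 1 + \<bar>r i * r j\<bar>"
  using assms by (simp add: pair_weight_def mult.commute)

lemma per_on_fun_matrix_remove:
  assumes fin: "finite S" and i: "i \<in> S"
    and "g i = i \<or> g i \<notin> S \<or> (\<forall>l\<in>S. l \<noteq> i \<longrightarrow> g l \<noteq> i)"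
  shows "per_on S (fun_matrix g r) = fun_matrix g r i i * per_on (S - {i}) (fun_matrix g r)"
proof (cases "g i = i \<or> g i \<notin> S")
  case True
  then show ?thesis
    by (intro per_on_diagonal_row[OF fin i]) (auto simp: fun_matrix_def)
next
  case False
  with assms(3) show ?thesis
    by (intro per_on_diagonal_column[OF fin i]) (auto simp: fun_matrix_def)
qed

text \<open>Splitting row \<open>i\<close> of \<open>I - diag r * P\<^sub>g\<close> into \<open>e\<^sub>i\<close> and \<open>- r i * e\<^sub>k\<close> and contracting the
  second summand along the unique arrow \<open>j \<mapsto> i\<close> shortens the path \<open>j \<mapsto> i \<mapsto> k\<close> to an arrow
  \<open>j \<mapsto> k\<close> of weight \<open>- r i * r j\<close>.\<close>
lemma per_on_fun_matrix_contract:
  assumes fin: "finite S" and i: "i \<in> S" and j: "j \<in> S" and "i \<noteq> j"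
    and "g i = k" "k \<noteq> i" "g j = i"
    and in_unique: "\<And>l. l \<in> S \<Longrightarrow> g l = i \<Longrightarrow> l = j"
  shows "per_on S (fun_matrix g r)
           = per_on (S - {i}) (fun_matrix (g(j := k)) (r(j := - (r i * r j))))"
proof -
  define M where "M = fun_matrix g r"
  define M1 where "M1 = M(i := (\<lambda>c. if i = c then 1 else 0))"
  define M2 where "M2 = M(i := (\<lambda>c. - r i * (if k = c then 1 else 0)))"
  have fin': "finite (S - {i})" and j': "j \<in> S - {i}" using fin j \<open>i \<noteq> j\<close> by auto
  have "per_on S M = per_on S M1 + per_on S M2"
    by (rule per_on_row_additive[OF fin i]) (auto simp: M_def M1_def M2_def fun_matrix_def assms(5))
  moreover have "per_on S M1 = per_on (S - {i}) M"
  proof -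
    have "per_on S M1 = M1 i i * per_on (S - {i}) M1"
      by (rule per_on_diagonal_row[OF fin i]) (auto simp: M1_def)
    moreover have "per_on (S - {i}) M1 = per_on (S - {i}) M"
      by (rule per_on_cong) (auto simp: M1_def)
    moreover have "M1 i i = 1" by (simp add: M1_def)
    ultimately show ?thesis by simp
  qed
  moreover have "per_on S M2 = per_on (S - {i}) (M2(j := (\<lambda>c. M2 j i * M2 i c)))"
  proof (rule per_on_contract[OF fin i j \<open>i \<noteq> j\<close>])
    fix l assume l: "l \<in> S" "l \<noteq> j"
    show "M2 l i = 0"
    proof (cases "l = i")
      case True
      then show ?thesis using \<open>k \<noteq> i\<close> by (simp add: M2_def)
    next
      case False
      then have "g l \<noteq> i" using in_unique l by blast
      then show ?thesis using False by (simp add: M2_def M_def fun_matrix_def)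
    qed
  qed
  moreover have "per_on (S - {i}) (fun_matrix (g(j := k)) (r(j := - (r i * r j))))
      = per_on (S - {i}) M + per_on (S - {i}) (M2(j := (\<lambda>c. M2 j i * M2 i c)))"
    by (rule per_on_row_additive[OF fin' j'])
      (use \<open>i \<noteq> j\<close> \<open>g j = i\<close> in \<open>auto simp: M_def M2_def fun_matrix_def\<close>)
  ultimately show ?thesis by (simp add: M_def)
qed

lemma involution_on_fix:
  assumes "i \<in> S" and "involution_on \<sigma> (S - {i})"
  shows "involution_on (\<sigma>(i := i)) S"
  using assms unfolding involution_on_def by auto

lemma involution_on_add_2cycle:
  assumes "i \<in> S" "j \<in> S" "i \<noteq> j" and inv: "involution_on \<sigma> (S - {i})" and "\<sigma> j = j"
  shows "involution_on (\<sigma>(i := j, j := i)) S"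
  unfolding involution_on_def
proof
  fix l assume l: "l \<in> S"
  show "(\<sigma>(i := j, j := i)) l \<in> S \<and> (\<sigma>(i := j, j := i)) ((\<sigma>(i := j, j := i)) l) = l"
  proof (cases "l = i \<or> l = j")
    case True
    then show ?thesis using assms by auto
  next
    case False
    then have "\<sigma> l \<in> S - {i}" "\<sigma> (\<sigma> l) = l" using inv l unfolding involution_on_def by auto
    moreover have "\<sigma> l \<noteq> j" using \<open>\<sigma> (\<sigma> l) = l\<close> \<open>\<sigma> j = j\<close> False by auto
    ultimately show ?thesis using False by auto
  qed
qed

lemma prod_pair_weight_fix:
  assumes "finite S" "i \<in> S"
  shows "(\<Prod>l\<in>S. pair_weight (\<sigma>(i := i)) r l)
           = (1 + max 0 (- r i)) * (\<Prod>l\<in>S - {i}. pair_weight \<sigma> r l)"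
proof -
  have "(\<Prod>l\<in>S - {i}. pair_weight (\<sigma>(i := i)) r l) = (\<Prod>l\<in>S - {i}. pair_weight \<sigma> r l)"
    by (intro prod.cong refl) (auto simp: pair_weight_def)
  then show ?thesis by (simp add: prod.remove[OF assms] pair_weight_def)
qed

lemma prod_pair_weight_contract_fixed:
  assumes fin: "finite S" and i: "i \<in> S" and j: "j \<in> S" and "i \<noteq> j"
    and inv: "involution_on \<sigma> (S - {i})" and "\<sigma> j = j"
  shows "(\<Prod>l\<in>S - {i}. pair_weight \<sigma> (r(j := - (r i * r j))) l)
           \<le> (\<Prod>l\<in>S. pair_weight (\<sigma>(i := j, j := i)) r l)"
proof -
  let ?\<sigma>' = "\<sigma>(i := j, j := i)"
  let ?R = "\<Prod>l\<in>S - {i} - {j}. pair_weight \<sigma> r l"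
  have fin': "finite (S - {i})" and j': "j \<in> S - {i}" using fin j \<open>i \<noteq> j\<close> by auto
  have off_ij: "\<sigma> l \<noteq> i \<and> \<sigma> l \<noteq> j" if "l \<in> S - {i} - {j}" for l
    using inv that \<open>\<sigma> j = j\<close> unfolding involution_on_def by (metis Diff_iff insertI1)
  have "(\<Prod>l\<in>S - {i}. pair_weight \<sigma> (r(j := - (r i * r j))) l) = (1 + max 0 (r i * r j)) * ?R"
  proof -
    have "(\<Prod>l\<in>S - {i} - {j}. pair_weight \<sigma> (r(j := - (r i * r j))) l) = ?R"
      by (intro prod.cong refl) (use off_ij in \<open>auto simp: pair_weight_def\<close>)
    then show ?thesis using \<open>\<sigma> j = j\<close> by (simp add: prod.remove[OF fin' j'] pair_weight_def)
  qed
  also have "\<dots> \<le> (1 + \<bar>r i * r j\<bar>) * ?R"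
    by (intro mult_right_mono prod_nonneg) (auto simp: pair_weight_nonneg)
  also have "\<dots> = pair_weight ?\<sigma>' r i * pair_weight ?\<sigma>' r j * (\<Prod>l\<in>S - {i} - {j}. pair_weight ?\<sigma>' r l)"
  proof -
    have "(\<Prod>l\<in>S - {i} - {j}. pair_weight ?\<sigma>' r l) = ?R"
      by (intro prod.cong refl) (use off_ij in \<open>auto simp: pair_weight_def\<close>)
    then show ?thesis using \<open>i \<noteq> j\<close> by (simp add: pair_weight_2cycle)
  qed
  also have "\<dots> = (\<Prod>l\<in>S. pair_weight ?\<sigma>' r l)"
    by (simp add: prod.remove[OF fin i] prod.remove[OF fin' j'] mult.assoc)
  finally show ?thesis .
qed

lemma prod_pair_weight_contract_moved:
  assumes fin: "finite S" and i: "i \<in> S" and "\<bar>r i\<bar> \<le> 1" and "\<sigma> j \<noteq> j"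
  shows "(\<Prod>l\<in>S - {i}. pair_weight \<sigma> (r(j := - (r i * r j))) l)
           \<le> (\<Prod>l\<in>S. pair_weight (\<sigma>(i := i)) r l)"
proof -
  let ?r' = "r(j := - (r i * r j))"
  have abs_r': "\<bar>?r' l\<bar> \<le> \<bar>r l\<bar>" for l
    using mult_right_mono[OF \<open>\<bar>r i\<bar> \<le> 1\<close>, of "\<bar>r j\<bar>"] by (auto simp: abs_mult)
  have "pair_weight \<sigma> ?r' l \<le> pair_weight \<sigma> r l" for l
  proof (cases "\<sigma> l = l")
    case True
    then have "l \<noteq> j" using \<open>\<sigma> j \<noteq> j\<close> by auto
    with True show ?thesis by (simp add: pair_weight_def)
  next
    case False
    have "\<bar>?r' l * ?r' (\<sigma> l)\<bar> \<le> \<bar>r l * r (\<sigma> l)\<bar>"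
      unfolding abs_mult by (intro mult_mono abs_r') auto
    with False show ?thesis by (simp add: pair_weight_def)
  qed
  then have "(\<Prod>l\<in>S - {i}. pair_weight \<sigma> ?r' l) \<le> (\<Prod>l\<in>S - {i}. pair_weight \<sigma> r l)"
    by (intro prod_mono) (simp add: pair_weight_nonneg)
  also have "\<dots> \<le> (1 + max 0 (- r i)) * (\<Prod>l\<in>S - {i}. pair_weight \<sigma> r l)"
    using mult_right_mono[of 1 "1 + max 0 (- r i)" "\<Prod>l\<in>S - {i}. pair_weight \<sigma> r l"]
    by (simp add: prod_nonneg pair_weight_nonneg)
  also have "\<dots> = (\<Prod>l\<in>S. pair_weight (\<sigma>(i := i)) r l)"
    by (rule prod_pair_weight_fix[OF fin i, symmetric])
  finally show ?thesis .
qed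

lemma per_on_fun_matrix_remove_le:
  assumes fin: "finite S" and i: "i \<in> S"
    and removable: "g i = i \<or> g i \<notin> S \<or> (\<forall>l\<in>S. l \<noteq> i \<longrightarrow> g l \<noteq> i)"
    and "\<bar>r i\<bar> \<le> 1"
    and bound: "per_on (S - {i}) (fun_matrix g r) \<le> (\<Prod>l\<in>S - {i}. pair_weight \<sigma> r l)"
  shows "per_on S (fun_matrix g r) \<le> (\<Prod>l\<in>S. pair_weight (\<sigma>(i := i)) r l)"
proof -
  have diag: "0 \<le> fun_matrix g r i i" "fun_matrix g r i i \<le> 1 + max 0 (- r i)"
    using \<open>\<bar>r i\<bar> \<le> 1\<close> by (auto simp: fun_matrix_def)
  have "per_on S (fun_matrix g r) = fun_matrix g r i i * per_on (S - {i}) (fun_matrix g r)"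
    by (rule per_on_fun_matrix_remove[OF fin i removable])
  also have "\<dots> \<le> fun_matrix g r i i * (\<Prod>l\<in>S - {i}. pair_weight \<sigma> r l)"
    by (rule mult_left_mono[OF bound diag(1)])
  also have "\<dots> \<le> (1 + max 0 (- r i)) * (\<Prod>l\<in>S - {i}. pair_weight \<sigma> r l)"
    by (intro mult_right_mono[OF diag(2)] prod_nonneg) (simp add: pair_weight_nonneg)
  also have "\<dots> = (\<Prod>l\<in>S. pair_weight (\<sigma>(i := i)) r l)"
    by (rule prod_pair_weight_fix[OF fin i, symmetric])
  finally show ?thesis .
qed

lemma involution_on_contract_step:
  assumes fin: "finite S" and i: "i \<in> S" and j: "j \<in> S" and "i \<noteq> j" and "\<bar>r i\<bar> \<le> 1"
    and \<sigma>: "involution_on \<sigma> (S - {i})"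
  shows "\<exists>\<sigma>'. involution_on \<sigma>' S \<and>
           (\<Prod>l\<in>S - {i}. pair_weight \<sigma> (r(j := - (r i * r j))) l) \<le> (\<Prod>l\<in>S. pair_weight \<sigma>' r l)"
proof (cases "\<sigma> j = j")
  case True
  then show ?thesis
    using prod_pair_weight_contract_fixed[OF fin i j \<open>i \<noteq> j\<close> \<sigma> True]
      involution_on_add_2cycle[OF i j \<open>i \<noteq> j\<close> \<sigma> True] by blast
next
  case False
  then show ?thesis
    using prod_pair_weight_contract_moved[of S i r \<sigma> j, OF fin i \<open>\<bar>r i\<bar> \<le> 1\<close> False]
      involution_on_fix[OF i \<sigma>] by blast
qed

lemma finite_self_map_unique_preimage:
  assumes fin: "finite S" and onto: "\<forall>l\<in>S. g l \<in> S \<and> (\<exists>m\<in>S. m \<noteq> l \<and> g m = l)" and i: "i \<in> S"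
  obtains j where "j \<in> S" "j \<noteq> i" "g j = i" "\<And>l. l \<in> S \<Longrightarrow> g l = i \<Longrightarrow> l = j"
proof -
  have "g ` S = S" using onto by force
  then have inj: "inj_on g S" by (intro eq_card_imp_inj_on[OF fin]) simp
  obtain j where j: "j \<in> S" "j \<noteq> i" "g j = i" using onto i by blast
  moreover have "l = j" if "l \<in> S" "g l = i" for l
    using inj_onD[OF inj _ that(1) j(1)] that(2) j(3) by simp
  ultimately show thesis using that by blast
qed

lemma per_on_fun_matrix_le_pair_weights:
  assumes "finite S" and "\<forall>i\<in>S. \<bar>r i\<bar> \<le> 1"
  shows "\<exists>\<sigma>. involution_on \<sigma> S \<and> per_on S (fun_matrix g r) \<le> (\<Prod>i\<in>S. pair_weight \<sigma> r i)"
  using assms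
proof (induction "card S" arbitrary: S g r rule: less_induct)
  case less
  note fin = \<open>finite S\<close> and r_le = \<open>\<forall>i\<in>S. \<bar>r i\<bar> \<le> 1\<close>
  have IH: "\<exists>\<sigma>. involution_on \<sigma> (S - {i}) \<and>
      per_on (S - {i}) (fun_matrix g' r') \<le> (\<Prod>l\<in>S - {i}. pair_weight \<sigma> r' l)"
    if "i \<in> S" "\<forall>l\<in>S - {i}. \<bar>r' l\<bar> \<le> 1" for i g' r'
    using less.hyps[OF card_Diff1_less[OF fin \<open>i \<in> S\<close>]] fin that by blast
  show ?case
  proof (cases "\<exists>i\<in>S. g i = i \<or> g i \<notin> S \<or> (\<forall>l\<in>S. l \<noteq> i \<longrightarrow> g l \<noteq> i)")
    case True
    then obtain i where i: "i \<in> S"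
      and removable: "g i = i \<or> g i \<notin> S \<or> (\<forall>l\<in>S. l \<noteq> i \<longrightarrow> g l \<noteq> i)" by blast
    obtain \<sigma> where \<sigma>: "involution_on \<sigma> (S - {i})"
      and bound: "per_on (S - {i}) (fun_matrix g r) \<le> (\<Prod>l\<in>S - {i}. pair_weight \<sigma> r l)"
      using IH[OF i] r_le by blast
    have "\<bar>r i\<bar> \<le> 1" using r_le i by blast
    with per_on_fun_matrix_remove_le[OF fin i removable _ bound] involution_on_fix[OF i \<sigma>]
    show ?thesis by blast
  next
    case False
    show ?thesis
    proof (cases "S = {}")
      case True
      then show ?thesis by (auto simp: involution_on_def)
    next
      case False
      then obtain i where i: "i \<in> S" by blast
      have onto: "\<forall>l\<in>S. g l \<in> S \<and> (\<exists>m\<in>S. m \<noteq> l \<and> g m = l)" and "g i \<noteq> i"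
        using \<open>\<not> (\<exists>i\<in>S. _)\<close> i by blast+
      obtain j where j: "j \<in> S" "j \<noteq> i" "g j = i" and in_unique: "\<And>l. l \<in> S \<Longrightarrow> g l = i \<Longrightarrow> l = j"
        using finite_self_map_unique_preimage[OF fin onto i] by blast
      define r' where "r' = r(j := - (r i * r j))"
      have "\<forall>l\<in>S - {i}. \<bar>r' l\<bar> \<le> 1"
        using r_le i j by (auto simp: r'_def abs_mult intro: mult_le_one)
      then obtain \<sigma> where \<sigma>: "involution_on \<sigma> (S - {i})"
        and bound: "per_on (S - {i}) (fun_matrix (g(j := g i)) r') \<le> (\<Prod>l\<in>S - {i}. pair_weight \<sigma> r' l)"
        using IH[OF i] by blast
      have "\<bar>r i\<bar> \<le> 1" using r_le i by blast
      obtain \<sigma>' where "involution_on \<sigma>' S"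
        and contracted: "(\<Prod>l\<in>S - {i}. pair_weight \<sigma> r' l) \<le> (\<Prod>l\<in>S. pair_weight \<sigma>' r l)"
        using involution_on_contract_step[where r = r, OF fin i j(1) j(2)[symmetric] \<open>\<bar>r i\<bar> \<le> 1\<close> \<sigma>]
        unfolding r'_def by blast
      have "per_on S (fun_matrix g r) = per_on (S - {i}) (fun_matrix (g(j := g i)) r')"
        unfolding r'_def
        by (rule per_on_fun_matrix_contract[OF fin i j(1) j(2)[symmetric] refl \<open>g i \<noteq> i\<close> j(3) in_unique])
      also note bound
      also note contracted
      finally show ?thesis using \<open>involution_on \<sigma>' S\<close> by blast
    qed
  qed
qed

section \<open>From involutions to pairings\<close>

lemma involution_on_pick_pair:
  assumes fin: "finite T" and "2 \<le> card T" and inv: "involution_on \<sigma> T" and r: "\<forall>i\<in>T. 0 \<le> r i"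
  shows "\<exists>b c. b \<in> T \<and> c \<in> T \<and> b \<noteq> c \<and> involution_on \<sigma> (T - {b, c}) \<and>
           pair_weight \<sigma> r b * pair_weight \<sigma> r c \<le> 1 + r b * r c"
proof (cases "\<exists>b\<in>T. \<sigma> b \<noteq> b")
  case True
  then obtain b where b: "b \<in> T" "\<sigma> b \<noteq> b" by blast
  define c where "c = \<sigma> b"
  have c: "c \<in> T" "\<sigma> c = b" "b \<noteq> c" using inv b unfolding involution_on_def c_def by auto
  have "involution_on \<sigma> (T - {b, c})"
    unfolding involution_on_def
  proof
    fix l assume l: "l \<in> T - {b, c}"
    then have "\<sigma> l \<in> T" "\<sigma> (\<sigma> l) = l" using inv unfolding involution_on_def by auto
    moreover have "\<sigma> l \<noteq> b" "\<sigma> l \<noteq> c" using \<open>\<sigma> (\<sigma> l) = l\<close> l c(2) by (auto simp: c_def)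
    ultimately show "\<sigma> l \<in> T - {b, c} \<and> \<sigma> (\<sigma> l) = l" by simp
  qed
  moreover have "pair_weight \<sigma> r b * pair_weight \<sigma> r c = 1 + r b * r c"
    using pair_weight_2cycle[of \<sigma> b c r] c r b(1) by (simp add: c_def)
  ultimately show ?thesis using b(1) c by (intro exI[of _ b] exI[of _ c]) simp
next
  case False
  obtain b c where bc: "b \<in> T" "c \<in> T" "b \<noteq> c"
    using card_le_Suc0_iff_eq[OF fin] \<open>2 \<le> card T\<close> by force
  have "involution_on \<sigma> (T - {b, c})" using False by (simp add: involution_on_def)
  moreover have "pair_weight \<sigma> r b * pair_weight \<sigma> r c = 1" "0 \<le> r b * r c"
    using False r bc by (simp_all add: pair_weight_def)
  ultimately show ?thesis using bc by (intro exI[of _ b] exI[of _ c]) simp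
qed

lemma prod_pair_weight_le_pairing:
  assumes "finite T" "card T = 2 * m" "involution_on \<sigma> T" "\<forall>i\<in>T. 0 \<le> r i"
  shows "\<exists>\<tau>. bij_betw \<tau> {..<2*m} T \<and>
           (\<Prod>i\<in>T. pair_weight \<sigma> r i) \<le> (\<Prod>k<m. 1 + r (\<tau> (2*k)) * r (\<tau> (2*k+1)))"
  using assms
proof (induction m arbitrary: T \<sigma>)
  case 0
  then show ?case by (simp add: bij_betw_def)
next
  case (Suc m)
  obtain b c where bc: "b \<in> T" "c \<in> T" "b \<noteq> c" and inv: "involution_on \<sigma> (T - {b, c})"
    and pair: "pair_weight \<sigma> r b * pair_weight \<sigma> r c \<le> 1 + r b * r c"
    using involution_on_pick_pair[of T \<sigma> r] Suc.prems by auto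
  have "card (T - {b, c}) = 2 * m" using Suc.prems bc by (simp add: card_Diff_subset)
  then obtain \<tau> where \<tau>: "bij_betw \<tau> {..<2*m} (T - {b, c})"
    and bound: "(\<Prod>i\<in>T - {b, c}. pair_weight \<sigma> r i) \<le> (\<Prod>k<m. 1 + r (\<tau> (2*k)) * r (\<tau> (2*k+1)))"
    using Suc.IH[OF _ _ inv] Suc.prems by auto
  define \<tau>' where "\<tau>' = \<tau>(2*m := b, 2*m+1 := c)"
  have low: "\<tau>' k = \<tau> k" if "k < 2*m" for k using that by (simp add: \<tau>'_def)
  have "bij_betw \<tau>' ({..<2*m} \<union> {2*m, 2*m+1}) ((T - {b, c}) \<union> {b, c})"
  proof (rule bij_betw_combine)
    show "bij_betw \<tau>' {..<2*m} (T - {b, c})" using \<tau> by (rule bij_betw_cong[THEN iffD1, rotated]) (simp add: low)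
    show "bij_betw \<tau>' {2*m, 2*m+1} {b, c}" using bc by (simp add: \<tau>'_def bij_betw_def)
  qed auto
  moreover have "{..<2*m} \<union> {2*m, 2*m+1} = {..<2 * Suc m}" by auto
  moreover have "(T - {b, c}) \<union> {b, c} = T" using bc by auto
  ultimately have bij: "bij_betw \<tau>' {..<2 * Suc m} T" by simp
  have "(\<Prod>i\<in>T. pair_weight \<sigma> r i)
      = (\<Prod>i\<in>T - {b, c}. pair_weight \<sigma> r i) * (pair_weight \<sigma> r b * pair_weight \<sigma> r c)"
    using prod.subset_diff[of "{b, c}" T] Suc.prems bc by simp
  also have "\<dots> \<le> (\<Prod>k<m. 1 + r (\<tau> (2*k)) * r (\<tau> (2*k+1))) * (1 + r b * r c)"
    by (intro mult_mono' bound pair prod_nonneg mult_nonneg_nonneg pair_weight_nonneg)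
  also have "\<dots> = (\<Prod>k<Suc m. 1 + r (\<tau>' (2*k)) * r (\<tau>' (2*k+1)))"
    by (simp add: \<tau>'_def low)
  finally show ?case using bij by blast
qed

lemma per_on_fun_matrix_le_pairing:
  fixes n m :: nat
  assumes "n = 2 * m" and r: "\<forall>i<n. 0 \<le> r i \<and> r i \<le> 1"
  shows "\<exists>\<tau>. \<tau> permutes {..<n} \<and>
           per_on {..<n} (fun_matrix g r) \<le> (\<Prod>k<m. 1 + r (\<tau> (2*k)) * r (\<tau> (2*k+1)))"
proof -
  have "\<exists>\<sigma>. involution_on \<sigma> {..<n} \<and>
      per_on {..<n} (fun_matrix g r) \<le> (\<Prod>i<n. pair_weight \<sigma> r i)"
    by (rule per_on_fun_matrix_le_pair_weights) (use r in auto)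
  then obtain \<sigma> where \<sigma>: "involution_on \<sigma> {..<n}"
    and per_le: "per_on {..<n} (fun_matrix g r) \<le> (\<Prod>i<n. pair_weight \<sigma> r i)"
    by blast
  obtain \<tau> where \<tau>: "bij_betw \<tau> {..<2*m} {..<n}"
    and weights_le: "(\<Prod>i<n. pair_weight \<sigma> r i) \<le> (\<Prod>k<m. 1 + r (\<tau> (2*k)) * r (\<tau> (2*k+1)))"
    using prod_pair_weight_le_pairing[of "{..<n}" m \<sigma> r] \<open>n = 2 * m\<close> \<sigma> r by auto
  define \<tau>' where "\<tau>' i = (if i < n then \<tau> i else i)" for i
  have "bij_betw \<tau>' {..<n} {..<n}"
    using \<tau> unfolding \<open>n = 2 * m\<close> by (rule bij_betw_cong[THEN iffD1, rotated]) (simp add: \<tau>'_def \<open>n = 2 * m\<close>)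
  then have "\<tau>' permutes {..<n}" by (rule bij_imp_permutes) (simp add: \<tau>'_def)
  moreover have "(\<Prod>k<m. 1 + r (\<tau> (2*k)) * r (\<tau> (2*k+1))) = (\<Prod>k<m. 1 + r (\<tau>' (2*k)) * r (\<tau>' (2*k+1)))"
    using \<open>n = 2 * m\<close> by (intro prod.cong refl) (simp add: \<tau>'_def)
  ultimately show ?thesis using per_le weights_le by auto
qed

section \<open>Convex decomposition of \<open>I - A\<close>\<close>

lemma row_substochastic_row_sum:
  assumes "row_substochastic n A" and "i < n"
  shows "0 \<le> row_sum n A i" and "row_sum n A i \<le> 1"
  using assms by (auto simp: row_substochastic_def row_sum_def intro: sum_nonneg)

lemma row_substochastic_factor:
  assumes A: "row_substochastic n A"
  obtains c where "\<And>i k. i < n \<Longrightarrow> k < n \<Longrightarrow> 0 \<le> c i k"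
    and "\<And>i. i < n \<Longrightarrow> (\<Sum>k<n. c i k) = 1"
    and "\<And>i j. i < n \<Longrightarrow> j < n \<Longrightarrow> A i j = row_sum n A i * c i j"
proof -
  let ?r = "row_sum n A"
  define c where "c i k = (if ?r i = 0 then (if k = i then 1 else 0) else A i k / ?r i)" for i k
  have A_nonneg: "0 \<le> A i j" if "i < n" "j < n" for i j
    using A that by (simp add: row_substochastic_def)
  have "0 \<le> c i k" if "i < n" "k < n" for i k
    using that A_nonneg row_substochastic_row_sum(1)[OF A] by (simp add: c_def)
  moreover have "(\<Sum>k<n. c i k) = 1" if "i < n" for i
    using that by (cases "?r i = 0") (simp_all add: c_def sum_divide_distrib[symmetric] row_sum_def)
  moreover have "A i j = ?r i * c i j" if "i < n" "j < n" for i j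
  proof (cases "?r i = 0")
    case True
    then have "A i j = 0"
      using sum_nonneg_eq_0_iff[of "{..<n}" "A i"] A_nonneg that by (simp add: row_sum_def)
    then show ?thesis using True by (simp add: c_def)
  qed (simp add: c_def)
  ultimately show thesis by (rule that)
qed

lemma per_id_minus_le_if_fun_matrices_le:
  assumes A: "row_substochastic n A"
    and bound: "\<And>g. g \<in> PiE {..<n} (\<lambda>_. {..<n}) \<Longrightarrow> per_on {..<n} (fun_matrix g (row_sum n A)) \<le> R"
  shows "per n (id_minus A) \<le> R"
proof -
  let ?r = "row_sum n A" and ?G = "PiE {..<n} (\<lambda>_. {..<n})"
  obtain c where c_nonneg: "\<And>i k. i < n \<Longrightarrow> k < n \<Longrightarrow> 0 \<le> c i k"
    and c_sum: "\<And>i. i < n \<Longrightarrow> (\<Sum>k<n. c i k) = 1"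
    and A_eq: "\<And>i j. i < n \<Longrightarrow> j < n \<Longrightarrow> A i j = ?r i * c i j"
    using row_substochastic_factor[OF A] by blast
  have rows: "id_minus A i j = (\<Sum>k<n. c i k * fun_matrix (\<lambda>_. k) ?r i j)"
    if "i \<in> {..<n}" "j \<in> {..<n}" for i j
  proof -
    have "(\<Sum>k<n. c i k * fun_matrix (\<lambda>_. k) ?r i j)
        = (\<Sum>k<n. (if i = j then 1 else 0) * c i k - (if k = j then ?r i * c i k else 0))"
      by (intro sum.cong refl) (simp add: fun_matrix_def algebra_simps)
    also have "\<dots> = (if i = j then 1 else 0) * (\<Sum>k<n. c i k) - ?r i * c i j"
      using that by (simp add: sum_subtractf sum_distrib_left)
    also have "\<dots> = id_minus A i j"
      using that by (simp add: c_sum A_eq id_minus_def)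
    finally show ?thesis ..
  qed
  have "per n (id_minus A)
      = (\<Sum>g\<in>?G. (\<Prod>i<n. c i (g i)) * per_on {..<n} (\<lambda>i. fun_matrix (\<lambda>_. g i) ?r i))"
    unfolding per_eq_per_on by (rule per_on_multilinear[OF finite_lessThan finite_lessThan rows])
  also have "\<dots> = (\<Sum>g\<in>?G. (\<Prod>i<n. c i (g i)) * per_on {..<n} (fun_matrix g ?r))"
    by (intro sum.cong refl arg_cong2[where f = times] per_on_cong) (simp add: fun_matrix_def)
  also have "\<dots> \<le> (\<Sum>g\<in>?G. (\<Prod>i<n. c i (g i)) * R)"
    by (intro sum_mono mult_left_mono bound prod_nonneg) (auto intro: c_nonneg)
  also have "\<dots> = (\<Sum>g\<in>?G. \<Prod>i<n. c i (g i)) * R"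
    by (simp add: sum_distrib_right)
  also have "(\<Sum>g\<in>?G. \<Prod>i<n. c i (g i)) = (\<Prod>i<n. \<Sum>k<n. c i k)"
    by (rule prod_sum_PiE[symmetric]) simp_all
  also have "\<dots> = 1" by (simp add: c_sum)
  finally show ?thesis by simp
qed

theorem mainTheorem9:
  fixes n :: nat and A :: "nat \<Rightarrow> nat \<Rightarrow> real"
  assumes "even n"
    and "row_substochastic n A"
  shows "\<exists>\<tau>. \<tau> permutes {0..<n} \<and>
           per n (id_minus A) \<le>
             (\<Prod>k<n div 2. 1 + row_sum n A (\<tau> (2*k)) * row_sum n A (\<tau> (2*k+1)))"
proof -
  let ?rhs = "\<lambda>\<tau>. \<Prod>k<n div 2. 1 + row_sum n A (\<tau> (2*k)) * row_sum n A (\<tau> (2*k+1))"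
  let ?P = "{\<tau>. \<tau> permutes {..<n}}"
  have fin: "finite (?rhs ` ?P)" using finite_permutations[of "{..<n}"] by simp
  have "?rhs ` ?P \<noteq> {}" using permutes_id[of "{..<n}"] by blast
  from Max_in[OF fin this] obtain \<tau> where \<tau>: "\<tau> permutes {..<n}"
    and max: "Max (?rhs ` ?P) = ?rhs \<tau>" by blast
  have "per n (id_minus A) \<le> ?rhs \<tau>"
  proof (rule per_id_minus_le_if_fun_matrices_le[OF assms(2)])
    fix g
    have "n = 2 * (n div 2)" using \<open>even n\<close> by simp
    then obtain \<tau>' where "\<tau>' permutes {..<n}"
      and per_le: "per_on {..<n} (fun_matrix g (row_sum n A)) \<le> ?rhs \<tau>'"
      using per_on_fun_matrix_le_pairing[of n "n div 2" "row_sum n A" g]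
        row_substochastic_row_sum[OF assms(2)] by blast
    then have "?rhs \<tau>' \<le> ?rhs \<tau>" unfolding max[symmetric] by (intro Max_ge[OF fin]) blast
    with per_le show "per_on {..<n} (fun_matrix g (row_sum n A)) \<le> ?rhs \<tau>" by linarith
  qed
  with \<tau> show ?thesis by (auto simp: atLeast0LessThan)
qed

end
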